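(* Let $R$ be a blind bisimulation on the nodes of a $\lambda$-graph $G$. Let $n,m,m'$ be nodes and $\tau$ a non-empty trace with $n\,R\,m$ and $m\xrightarrow{\tau}m'$. Then $n\,R\,m'$ does not hold.
   Context: A pre-$\lambda$-graph is a directed graph whose nodes are of four kinds: an application node $@(n_1,n_2)$ has exactly two children, its left child $n_1$ and its right child $n_2$; an abstraction node $\lambda(n)$ has exactly one child, its body $n$; a free variable node has no children and carries an atom $\mathrm{id}(n)$ from a fixed set of atoms, distinct free variable nodes carrying distinct atoms; a bound variable node $\mathrm{var}(l)$ has exactly one outgoing binding edge, to an abstraction node $l$ (its binder). A trace is a finite sequence of directions from $\{\swarrow,\downarrow,\searrow\}$; $\epsilon$ is the empty trace and $d\cdot\tau$ is the trace $\tau$ extended by one final step $d$. Paths $n\xrightarrow{\tau}m$ are defined inductively: $n\xrightarrow{\epsilon}n$; if $n\xrightarrow{\tau}\lambda(m)$ then $n\xrightarrow{\downarrow\cdot\tau}m$; if $n\xrightarrow{\tau}@(m_1,m_2)$ then $n\xrightarrow{\swarrow\cdot\tau}m_1$ and $n\xrightarrow{\searrow\cdot\tau}m_2$ (binding edges are never followed). The path $n\xrightarrow{\tau}$ crosses a node $m$ if either $n\xrightarrow{\tau}m$, or $\tau=d\cdot\tau'$ and $n\xrightarrow{\tau'}$ crosses $m$. A root is a node $r$ such that the only path ending in $r$ has the empty trace. A node $m$ dominates $n$ if every path from a root to $n$ crosses $m$. A $\lambda$-graph is a pre-$\lambda$-graph that has finitely many nodes, is acyclic ($n\xrightarrow{\tau}n$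 holds only for $\tau=\epsilon$), and is dominated (every bound variable node $\mathrm{var}(l)$ is dominated by its binder $l$). Two nodes are homogeneous if both are application nodes, or both abstraction nodes, or both free variable nodes, or both bound variable nodes; a binary relation $R$ on nodes is homogeneous if it only relates homogeneous nodes. Rules: $(\swarrow)$: $@(n_1,n_2)\,R\,@(m_1,m_2)$ implies $n_1\,R\,m_1$; $(\searrow)$: $@(n_1,n_2)\,R\,@(m_1,m_2)$ implies $n_2\,R\,m_2$; $(\downarrow)$: $\lambda(n)\,R\,\lambda(m)$ implies $n\,R\,m$. $R$ is propagated if closed under $(\swarrow),(\downarrow),(\searrow)$. A blind bisimulation is a homogeneous propagated relation. *)

theory Defs
  imports Main
begin

text \<open>A pre-lambda-graph over node type 'n (the nodes of the graph are all elements
of 'n) and atoms 'a is given by a labelling function assigning each node its kind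
and outgoing edges.\<close>

datatype ('n, 'a) node =
    App 'n 'n
  | Abs 'n
  | FVar 'a
  | BVar 'n

type_synonym ('n, 'a) graph = "'n \<Rightarrow> ('n, 'a) node"

datatype dir = SW | Down | SE

text \<open>Traces are lists of directions; the trace d.tau (tau extended by one final
step d) is represented as d # tau.\<close>
type_synonym trace = "dir list"

inductive path :: "('n, 'a) graph \<Rightarrow> 'n \<Rightarrow> trace \<Rightarrow> 'n \<Rightarrow> bool" for G where
  path_eps: "path G n [] n"
| path_down: "path G n \<tau> m \<Longrightarrow> G m = Abs m' \<Longrightarrow> path G n (Down # \<tau>) m'"
| path_sw: "path G n \<tau> m \<Longrightarrow> G m = App m1 m2 \<Longrightarrow> path G n (SW # \<tau>) m1"
| path_se: "path G n \<tau> m \<Longrightarrow> G m = App m1 m2 \<Longrightarrow> path G n (SE # \<tau>) m2"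

fun crosses :: "('n, 'a) graph \<Rightarrow> 'n \<Rightarrow> trace \<Rightarrow> 'n \<Rightarrow> bool" where
  "crosses G n [] m = path G n [] m"
| "crosses G n (d # \<tau>) m = (path G n (d # \<tau>) m \<or> crosses G n \<tau> m)"

definition is_root :: "('n, 'a) graph \<Rightarrow> 'n \<Rightarrow> bool" where
  "is_root G r \<longleftrightarrow> (\<forall>n \<tau>. path G n \<tau> r \<longrightarrow> \<tau> = [])"

definition dominates :: "('n, 'a) graph \<Rightarrow> 'n \<Rightarrow> 'n \<Rightarrow> bool" where
  "dominates G m n \<longleftrightarrow> (\<forall>r \<tau>. is_root G r \<longrightarrow> path G r \<tau> n \<longrightarrow> crosses G r \<tau> m)"

definition is_abs :: "('n, 'a) node \<Rightarrow> bool" where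
  "is_abs k \<longleftrightarrow> (\<exists>b. k = Abs b)"

definition pre_lambda_graph :: "('n, 'a) graph \<Rightarrow> bool" where
  "pre_lambda_graph G \<longleftrightarrow>
     (\<forall>n l. G n = BVar l \<longrightarrow> is_abs (G l)) \<and>
     (\<forall>n m a. G n = FVar a \<longrightarrow> G m = FVar a \<longrightarrow> n = m)"

definition lambda_graph :: "('n::finite, 'a) graph \<Rightarrow> bool" where
  "lambda_graph G \<longleftrightarrow> pre_lambda_graph G \<and>
     (\<forall>n \<tau>. path G n \<tau> n \<longrightarrow> \<tau> = []) \<and>
     (\<forall>n l. G n = BVar l \<longrightarrow> dominates G l n)"

fun same_kind :: "('n, 'a) node \<Rightarrow> ('n, 'a) node \<Rightarrow> bool" where
  "same_kind (App _ _) (App _ _) = True"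
| "same_kind (Abs _) (Abs _) = True"
| "same_kind (FVar _) (FVar _) = True"
| "same_kind (BVar _) (BVar _) = True"
| "same_kind _ _ = False"

definition homogeneous :: "('n, 'a) graph \<Rightarrow> ('n \<Rightarrow> 'n \<Rightarrow> bool) \<Rightarrow> bool" where
  "homogeneous G R \<longleftrightarrow> (\<forall>n m. R n m \<longrightarrow> same_kind (G n) (G m))"

definition propagated :: "('n, 'a) graph \<Rightarrow> ('n \<Rightarrow> 'n \<Rightarrow> bool) \<Rightarrow> bool" where
  "propagated G R \<longleftrightarrow>
     (\<forall>n m n1 n2 m1 m2. R n m \<longrightarrow> G n = App n1 n2 \<longrightarrow> G m = App m1 m2 \<longrightarrow> R n1 m1) \<and>
     (\<forall>n m n1 n2 m1 m2. R n m \<longrightarrow> G n = App n1 n2 \<longrightarrow> G m = App m1 m2 \<longrightarrow> R n2 m2) \<and>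
     (\<forall>n m n' m'. R n m \<longrightarrow> G n = Abs n' \<longrightarrow> G m = Abs m' \<longrightarrow> R n' m')"

definition blind_bisim :: "('n, 'a) graph \<Rightarrow> ('n \<Rightarrow> 'n \<Rightarrow> bool) \<Rightarrow> bool" where
  "blind_bisim G R \<longleftrightarrow> homogeneous G R \<and> propagated G R"

end

theory Submission
  imports Defs
begin

text \<open>A blind bisimulation transports every path from one of two related nodes to a
path with the same trace from the other, ending again in related nodes. If \<open>n R m\<close>
and \<open>n R m'\<close> with \<open>m \<midarrow>\<tau>\<rightarrow> m'\<close>, then any path from \<open>n\<close> can be moved to \<open>m'\<close>, preceded
by the step \<open>m \<midarrow>\<tau>\<rightarrow> m'\<close>, and moved back from \<open>m\<close> to \<open>n\<close>; hence \<open>n\<close> has a path with trace \<open>\<tau>\<^sup>k\<close>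
for every \<open>k\<close>. Paths are deterministic, so in a finite graph two of these paths end
in the same node, and the difference of their traces is a non-empty cycle,
contradicting acyclicity.\<close>

(* Traces list the last step first, so the first segment of a composite path
   contributes the suffix of its trace. *)
lemma path_append: "path G y \<rho> z \<Longrightarrow> path G x \<sigma> y \<Longrightarrow> path G x (\<rho> @ \<sigma>) z"
  by (induction rule: path.induct) (auto intro: path.intros)

lemma path_append_split:
  "path G x (\<rho> @ \<sigma>) z \<Longrightarrow> \<exists>y. path G x \<sigma> y \<and> path G y \<rho> z"
proof (induction \<rho> arbitrary: z)
  case Nil
  then show ?case by (auto intro: path.intros)
next
  case (Cons d \<rho>)
  from Cons.prems show ?case
    by (cases rule: path.cases) (auto dest!: Cons.IH intro: path.intros)
qed

lemma path_deterministic: "path G x \<sigma> y \<Longrightarrow> path G x \<sigma> y' \<Longrightarrow> y = y'"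
proof (induction arbitrary: y' rule: path.induct)
  case path_eps
  then show ?case by (cases rule: path.cases) auto
next
  case path_down
  from path_down.prems show ?case by (cases rule: path.cases) (use path_down in auto)
next
  case path_sw
  from path_sw.prems show ?case by (cases rule: path.cases) (use path_sw in auto)
next
  case path_se
  from path_se.prems show ?case by (cases rule: path.cases) (use path_se in auto)
qed

lemma same_kind_commute: "same_kind k l = same_kind l k"
  by (cases k; cases l) auto

lemma homogeneous_converse: "homogeneous G R \<Longrightarrow> homogeneous G (\<lambda>x y. R y x)"
  unfolding homogeneous_def using same_kind_commute by blast

lemma propagated_converse: "propagated G R \<Longrightarrow> propagated G (\<lambda>x y. R y x)"
  unfolding propagated_def by blast

lemma blind_bisim_converse: "blind_bisim G R \<Longrightarrow> blind_bisim G (\<lambda>x y. R y x)"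
  by (simp add: blind_bisim_def homogeneous_converse propagated_converse)

lemma blind_bisim_Abs:
  assumes "blind_bisim G R" and "R u v" and "G u = Abs u'"
  obtains v' where "G v = Abs v'" and "R u' v'"
proof (cases "G v")
  case (Abs v')
  with assms show thesis
    using that unfolding blind_bisim_def propagated_def by blast
qed (use assms in \<open>auto simp: blind_bisim_def homogeneous_def dest!: spec2\<close>)

lemma blind_bisim_App:
  assumes "blind_bisim G R" and "R u v" and "G u = App u1 u2"
  obtains v1 v2 where "G v = App v1 v2" and "R u1 v1" and "R u2 v2"
proof (cases "G v")
  case (App v1 v2)
  with assms show thesis
    using that unfolding blind_bisim_def propagated_def by blast
qed (use assms in \<open>auto simp: blind_bisim_def homogeneous_def dest!: spec2\<close>)

lemma blind_bisim_path:
  assumes bisim: "blind_bisim G R" and "R x y" and "path G x \<sigma> x'"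
  shows "\<exists>y'. path G y \<sigma> y' \<and> R x' y'"
  using assms(3,2)
proof (induction rule: path.induct)
  case path_eps
  then show ?case by (auto intro: path.intros)
next
  case (path_down x\<^sub>0 \<tau> u u')
  then obtain v where "path G y \<tau> v" "R u v" by blast
  moreover from bisim \<open>R u v\<close> \<open>G u = Abs u'\<close> obtain v' where "G v = Abs v'" "R u' v'"
    by (rule blind_bisim_Abs)
  ultimately show ?case by (blast intro: path.path_down)
next
  case (path_sw x\<^sub>0 \<tau> u u1 u2)
  then obtain v where "path G y \<tau> v" "R u v" by blast
  moreover from bisim \<open>R u v\<close> \<open>G u = App u1 u2\<close> obtain v1 v2
    where "G v = App v1 v2" "R u1 v1" by (rule blind_bisim_App)
  ultimately show ?case by (blast intro: path.path_sw)
next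
  case (path_se x\<^sub>0 \<tau> u u1 u2)
  then obtain v where "path G y \<tau> v" "R u v" by blast
  moreover from bisim \<open>R u v\<close> \<open>G u = App u1 u2\<close> obtain v1 v2
    where "G v = App v1 v2" "R u2 v2" by (rule blind_bisim_App)
  ultimately show ?case by (blast intro: path.path_se)
qed

lemma blind_bisim_path_pumping:
  assumes bisim: "blind_bisim G R" and "R n m" and "R n m'" and "path G m \<tau> m'"
  shows "\<exists>x. path G n (concat (replicate k \<tau>)) x"
proof (induction k)
  case 0
  show ?case by (auto intro: path.intros)
next
  case (Suc k)
  then obtain x where "path G n (concat (replicate k \<tau>)) x" by blast
  then obtain y where "path G m' (concat (replicate k \<tau>)) y"
    using blind_bisim_path[OF bisim \<open>R n m'\<close>] by blast
  from this \<open>path G m \<tau> m'\<close> have "path G m (concat (replicate k \<tau>) @ \<tau>) y"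
    by (rule path_append)
  moreover have "concat (replicate k \<tau>) @ \<tau> = concat (replicate (Suc k) \<tau>)"
    by (simp flip: replicate_append_same)
  ultimately have "path G m (concat (replicate (Suc k) \<tau>)) y" by simp
  from blind_bisim_path[OF blind_bisim_converse[OF bisim] \<open>R n m\<close> this]
  show ?case by blast
qed

lemma acyclic_no_pumping:
  fixes G :: "('n::finite, 'a) graph"
  assumes acyclic: "\<forall>x \<sigma>. path G x \<sigma> x \<longrightarrow> \<sigma> = []" and "\<tau> \<noteq> []"
  shows "\<not> (\<forall>k. \<exists>x. path G n (concat (replicate k \<tau>)) x)"
proof
  assume "\<forall>k. \<exists>x. path G n (concat (replicate k \<tau>)) x"
  then obtain end_of :: "nat \<Rightarrow> 'n"
    where ends: "\<And>k. path G n (concat (replicate k \<tau>)) (end_of k)"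
    by (metis choice)
  have "\<not> inj end_of"
    using finite_UNIV infinite_UNIV_nat inj_on_finite by blast
  then obtain i j where "end_of i = end_of j" "i < j"
    unfolding inj_def by (metis linorder_neqE_nat)
  have "replicate j \<tau> = replicate (j - i) \<tau> @ replicate i \<tau>"
    using \<open>i < j\<close> by (metis le_add_diff_inverse2 less_imp_le replicate_add)
  with ends[of j] obtain y where "path G n (concat (replicate i \<tau>)) y"
    and y_path: "path G y (concat (replicate (j - i) \<tau>)) (end_of j)"
    using path_append_split by fastforce
  with ends[of i] have "y = end_of i" by (blast dest: path_deterministic)
  with y_path \<open>end_of i = end_of j\<close>
  have "path G (end_of i) (concat (replicate (j - i) \<tau>)) (end_of i)" by simp
  with acyclic have "concat (replicate (j - i) \<tau>) = []" by blast
  with \<open>i < j\<close> \<open>\<tau> \<noteq> []\<close> show False by simp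
qed

theorem mainTheorem7:
  fixes G :: "('n::finite, 'a) graph" and R :: "'n \<Rightarrow> 'n \<Rightarrow> bool"
    and n m m' :: 'n and \<tau> :: trace
  assumes "lambda_graph G"
    and "blind_bisim G R"
    and "\<tau> \<noteq> []"
    and "R n m"
    and "path G m \<tau> m'"
  shows "\<not> R n m'"
proof
  assume "R n m'"
  from assms(1) have acyclic: "\<forall>x \<sigma>. path G x \<sigma> x \<longrightarrow> \<sigma> = []"
    unfolding lambda_graph_def by blast
  have "\<forall>k. \<exists>x. path G n (concat (replicate k \<tau>)) x"
    using blind_bisim_path_pumping[OF assms(2,4) \<open>R n m'\<close> assms(5)] by blast
  with acyclic_no_pumping[OF acyclic assms(3)] show False by blast
qed

end
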